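(* Fix a constant $\Delta\ge 1$. There exists a canonical routing labeling scheme for the family of rooted trees on $n$ nodes in which every node has at most $\Delta$ children, such that every label has length $\log n+\mathcal{O}(\log\log n)$ bits. The constant in the $\mathcal{O}(\cdot)$ may depend on $\Delta$.
   Context: All logarithms are base $2$. A (designer-port) routing labeling scheme for a family $\mathcal{T}$ of rooted trees consists of an encoder and a decoder. - The encoder is given $T\in\mathcal{T}$. It assigns a binary string (label) $\ell(u)$ to every node $u$. It also labels the edges from each node $u$ to its $\deg(u)$ children with distinct port numbers from $\{1,\dots,\deg(u)\}$; the encoder is free to choose these port numbers. - The decoder receives only $\ell(u)$ and $\ell(w)$ for nodes $u\neq w$ of some $T\in\mathcal{T}$; the value $\lceil\log n\rceil$, where $n=|T|$, may also be assumed known. It must return $0$ if the next node on the path from $u$ to $w$ is the parent of $u$. Otherwise it must return the port number of the first edge on that path. - The length of the scheme is the maximum label length over all trees in $\mathcal{T}$ and all their nodes. A port assignment is canonical if, for every node $v$ with children $v_1,\dots,v_i$ ordered so that $|T_{v_1}|\ge\dots\ge|T_{v_i}|$, the edge from $v$ to $v_j$ gets port $j$. Here $T_v$ denotes the subtree rooted at $v$; ties may be broken arbitrarily. A scheme is canonical if its encoder always produces a canonical port assignment. *)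

theory Defs
  imports Complex_Main "HOL-Library.Sublist"
begin

text \<open>A node is identified by its position: the list of child indices
  on the path from the root. The list order of children carries no meaning for the
  scheme (port numbers are chosen freely by the encoder).\<close>

datatype rtree = Node "rtree list"

fun children :: "rtree \<Rightarrow> rtree list" where
  "children (Node ts) = ts"

fun valid_pos :: "rtree \<Rightarrow> nat list \<Rightarrow> bool" where
  "valid_pos t [] = True"
| "valid_pos (Node ts) (i # p) = (i < length ts \<and> valid_pos (ts ! i) p)"

fun subtree_at :: "rtree \<Rightarrow> nat list \<Rightarrow> rtree" where
  "subtree_at t [] = t"
| "subtree_at (Node ts) (i # p) = subtree_at (ts ! i) p"

definition nodes :: "rtree \<Rightarrow> nat list set" where
  "nodes t = {p. valid_pos t p}"

definition tsize :: "rtree \<Rightarrow> nat" where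
  "tsize t = card (nodes t)"

definition deg :: "rtree \<Rightarrow> nat list \<Rightarrow> nat" where
  "deg t u = length (children (subtree_at t u))"

definition bounded_deg :: "nat \<Rightarrow> rtree \<Rightarrow> bool" where
  "bounded_deg \<Delta> t \<longleftrightarrow> (\<forall>u \<in> nodes t. deg t u \<le> \<Delta>)"

text \<open>A port assignment: \<open>port u i\<close> is the port number of the edge from node \<open>u\<close>
  to its child \<open>u @ [i]\<close>; the ports at \<open>u\<close> are distinct numbers in \<open>{1..deg u}\<close>.\<close>
definition port_assignment :: "rtree \<Rightarrow> (nat list \<Rightarrow> nat \<Rightarrow> nat) \<Rightarrow> bool" where
  "port_assignment t port \<longleftrightarrow>
     (\<forall>u \<in> nodes t. bij_betw (port u) {..<deg t u} {1..deg t u})"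

definition canonical_ports :: "rtree \<Rightarrow> (nat list \<Rightarrow> nat \<Rightarrow> nat) \<Rightarrow> bool" where
  "canonical_ports t port \<longleftrightarrow> port_assignment t port \<and>
     (\<forall>u \<in> nodes t. \<forall>i < deg t u. \<forall>j < deg t u.
        port u i < port u j \<longrightarrow>
          tsize (subtree_at t (u @ [j])) \<le> tsize (subtree_at t (u @ [i])))"

text \<open>The correct routing answer: 0 if the next node from \<open>u\<close> towards \<open>w\<close> is the
  parent of \<open>u\<close>, otherwise the port of the first edge (towards a child of \<open>u\<close>).\<close>
definition route :: "(nat list \<Rightarrow> nat \<Rightarrow> nat) \<Rightarrow> nat list \<Rightarrow> nat list \<Rightarrow> nat" where
  "route port u w = (if strict_prefix u w then port u (w ! length u) else 0)"

text \<open>A scheme: the encoder maps a tree to (labels, port assignment); the decoder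
  gets \<open>\<lceil>log n\<rceil>\<close> and the two labels.\<close>
type_synonym encoder = "rtree \<Rightarrow> (nat list \<Rightarrow> bool list) \<times> (nat list \<Rightarrow> nat \<Rightarrow> nat)"
type_synonym decoder = "nat \<Rightarrow> bool list \<Rightarrow> bool list \<Rightarrow> nat"

definition correct_on :: "encoder \<Rightarrow> decoder \<Rightarrow> rtree \<Rightarrow> bool" where
  "correct_on enc dec t \<longleftrightarrow>
     (let lab = fst (enc t); port = snd (enc t) in
        canonical_ports t port \<and>
        (\<forall>u \<in> nodes t. \<forall>w \<in> nodes t. u \<noteq> w \<longrightarrow>
           dec (nat \<lceil>log 2 (real (tsize t))\<rceil>) (lab u) (lab w) = route port u w))"

end

(*
  Interval routing with approximate subtree sizes.  Every node u gets an identifier, the first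
  address of a range reserved for its subtree: one address for u itself, then one slot per light
  child in order of decreasing size, then the range of the heavy child.  Storing the end of the
  range exactly would cost another log n bits.  Instead each light child gets a slot whose size is
  its own space rounded up to p = log log n + O(1) significant bits, so a slot is described by
  O(log log n) bits; inside its slot the child is aligned so that the end of its range is a multiple
  of 2^e lying within 2^(p+e) of its identifier, hence encodable by e and a quotient below 2^p.
  The heavy child shares the range end of its parent.  Rounding inflates the space by a factor
  1 + 4/2^p per light edge only, and a root-leaf path has at most log n light edges, so the total
  space stays below 3n and identifiers have log n + 2 bits.  The decoder answers 0 unless the
  target identifier lies in the range of u, and otherwise the port of the slot containing it.
*)

theory Submission
  imports Defs "HOL-Library.Log_Nat"
begin

fun tree_size :: "rtree \<Rightarrow> nat" where
  "tree_size (Node ts) = Suc (sum_list (map tree_size ts))"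

lemma nodes_Node: "nodes (Node ts) = insert [] (\<Union>i<length ts. (#) i ` nodes (ts ! i))"
proof (rule set_eqI)
  fix p
  show "p \<in> nodes (Node ts) \<longleftrightarrow> p \<in> insert [] (\<Union>i<length ts. (#) i ` nodes (ts ! i))"
    by (cases p) (auto simp: nodes_def)
qed

lemma finite_nodes: "finite (nodes t)"
  by (induction t) (auto simp: nodes_Node)

lemma tsize_eq_tree_size: "tsize t = tree_size t"
proof (induction t)
  case (Node ts)
  have "card (\<Union>i<length ts. (#) i ` nodes (ts ! i)) = (\<Sum>i<length ts. card ((#) i ` nodes (ts ! i)))"
    by (rule card_UN_disjoint) (auto simp: finite_nodes)
  also have "\<dots> = (\<Sum>i<length ts. tree_size (ts ! i))"
    using Node by (intro sum.cong) (auto simp: card_image tsize_def)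
  also have "\<dots> = sum_list (map tree_size ts)"
    by (simp add: sum_list_sum_nth atLeast0LessThan)
  finally show ?case
    unfolding tsize_def nodes_Node by (subst card_insert_disjoint) (auto simp: finite_nodes)
qed

lemma valid_pos_append: "valid_pos t (u @ v) \<longleftrightarrow> valid_pos t u \<and> valid_pos (subtree_at t u) v"
  by (induction t u rule: valid_pos.induct) auto

lemma subtree_at_append: "subtree_at t (u @ v) = subtree_at (subtree_at t u) v"
  by (induction t u rule: subtree_at.induct) auto

section \<open>Heavy-first order of the children\<close>

definition size_order :: "rtree list \<Rightarrow> nat list" where
  "size_order ts = sort_key (\<lambda>i. - int (tree_size (ts ! i))) [0..<length ts]"

lemma set_size_order: "set (size_order ts) = {..<length ts}"
  by (auto simp: size_order_def)

lemma distinct_size_order: "distinct (size_order ts)"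
  by (simp add: size_order_def)

lemma length_size_order: "length (size_order ts) = length ts"
  by (simp add: size_order_def)

lemma size_order_nonincreasing:
  assumes "a \<le> b" "b < length ts"
  shows "tree_size (ts ! (size_order ts ! b)) \<le> tree_size (ts ! (size_order ts ! a))"
proof -
  have "sorted (map (\<lambda>i. - int (tree_size (ts ! i))) (size_order ts))"
    by (simp add: size_order_def)
  then show ?thesis
    using assms sorted_nth_mono[of _ a b] by (fastforce simp: length_size_order)
qed

definition rank :: "rtree list \<Rightarrow> nat \<Rightarrow> nat" where
  "rank ts = inv_into {..<length ts} ((!) (size_order ts))"

lemma bij_betw_size_order: "bij_betw ((!) (size_order ts)) {..<length ts} {..<length ts}"
  by (rule bij_betw_nth[OF distinct_size_order]) (simp_all add: length_size_order set_size_order)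

lemma bij_betw_rank: "bij_betw (rank ts) {..<length ts} {..<length ts}"
  unfolding rank_def by (rule bij_betw_inv_into[OF bij_betw_size_order])

lemma size_order_rank: "i < length ts \<Longrightarrow> size_order ts ! rank ts i = i"
  unfolding rank_def by (simp add: bij_betw_inv_into_right[OF bij_betw_size_order])

lemma rank_size_order: "k < length ts \<Longrightarrow> rank ts (size_order ts ! k) = k"
  unfolding rank_def by (simp add: bij_betw_inv_into_left[OF bij_betw_size_order])

lemma rank_less: "i < length ts \<Longrightarrow> rank ts i < length ts"
  using bij_betwE[OF bij_betw_rank] by blast

definition heavy :: "rtree list \<Rightarrow> nat" where
  "heavy ts = size_order ts ! 0"

definition lights :: "rtree list \<Rightarrow> nat list" where
  "lights ts = tl (size_order ts)"

lemma length_lights: "length (lights ts) = length ts - 1"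
  by (simp add: lights_def length_size_order)

lemma lights_nth: "k < length (lights ts) \<Longrightarrow> lights ts ! k = size_order ts ! Suc k"
  by (simp add: lights_def nth_tl)

lemma heavy_less: "ts \<noteq> [] \<Longrightarrow> heavy ts < length ts"
  using nth_mem[of 0 "size_order ts"] by (simp add: heavy_def length_size_order set_size_order)

lemma rank_eq_0_iff:
  assumes "i < length ts"
  shows "rank ts i = 0 \<longleftrightarrow> i = heavy ts"
proof
  assume "rank ts i = 0"
  then show "i = heavy ts"
    using size_order_rank[OF assms] by (simp add: heavy_def)
next
  assume "i = heavy ts"
  moreover have "0 < length ts"
    using assms by linarith
  ultimately show "rank ts i = 0"
    by (simp add: heavy_def rank_size_order)
qed

lemma size_order_eq_Cons: "ts \<noteq> [] \<Longrightarrow> size_order ts = heavy ts # lights ts"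
  unfolding heavy_def lights_def using length_size_order[of ts]
  by (cases "size_order ts") auto

lemma set_lights: "set (lights ts) = {..<length ts} - {heavy ts}"
proof (cases "ts = []")
  case False
  then have "set (size_order ts) = insert (heavy ts) (set (lights ts))" "heavy ts \<notin> set (lights ts)"
    using size_order_eq_Cons[of ts] distinct_size_order[of ts] by (metis distinct.simps(2) list.simps(15))+
  then show ?thesis
    by (auto simp: set_size_order)
qed (simp add: lights_def size_order_def)

lemma lights_rank:
  assumes "i < length ts" "i \<noteq> heavy ts"
  shows "rank ts i - 1 < length (lights ts)" "lights ts ! (rank ts i - 1) = i"
proof -
  have r: "0 < rank ts i" "rank ts i < length ts"
    using assms rank_eq_0_iff rank_less by auto
  then show "rank ts i - 1 < length (lights ts)"
    by (simp add: length_lights)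
  then have "lights ts ! (rank ts i - 1) = size_order ts ! rank ts i"
    using r by (simp add: lights_nth)
  then show "lights ts ! (rank ts i - 1) = i"
    using assms(1) size_order_rank by simp
qed

lemma light_size_le_heavy:
  assumes "i \<in> set (lights ts)"
  shows "tree_size (ts ! i) \<le> tree_size (ts ! heavy ts)"
proof -
  obtain k where "k < length (lights ts)" "i = size_order ts ! Suc k"
    using assms by (metis in_set_conv_nth lights_nth)
  then show ?thesis
    using size_order_nonincreasing[of 0 "Suc k" ts] by (simp add: heavy_def length_lights)
qed

lemma heavy_plus_lights_size:
  assumes "ts \<noteq> []"
  shows "tree_size (ts ! heavy ts) + sum_list (map (\<lambda>i. tree_size (ts ! i)) (lights ts))
           = sum_list (map tree_size ts)"
proof -
  have "tree_size (ts ! heavy ts) + sum_list (map (\<lambda>i. tree_size (ts ! i)) (lights ts))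
          = sum_list (map (\<lambda>i. tree_size (ts ! i)) (size_order ts))"
    by (simp add: size_order_eq_Cons[OF assms])
  also have "\<dots> = (\<Sum>i<length ts. tree_size (ts ! i))"
    using sum_list_distinct_conv_sum_set[OF distinct_size_order] set_size_order by metis
  also have "\<dots> = sum_list (map tree_size ts)"
    by (simp add: sum_list_sum_nth atLeast0LessThan)
  finally show ?thesis .
qed

definition heavy_first_ports :: "rtree \<Rightarrow> nat list \<Rightarrow> nat \<Rightarrow> nat" where
  "heavy_first_ports t u i = Suc (rank (children (subtree_at t u)) i)"

lemma subtree_at_child: "subtree_at t u = Node ts \<Longrightarrow> subtree_at t (u @ [i]) = ts ! i"
  by (simp add: subtree_at_append)

lemma canonical_heavy_first_ports: "canonical_ports t (heavy_first_ports t)"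
  unfolding canonical_ports_def port_assignment_def
proof (intro conjI ballI allI impI)
  fix u
  obtain ts where ts: "subtree_at t u = Node ts" by (cases "subtree_at t u")
  have "bij_betw Suc {..<length ts} {1..length ts}"
    by (simp add: bij_betw_def image_Suc_lessThan)
  then have "bij_betw (Suc \<circ> rank ts) {..<length ts} {1..length ts}"
    by (rule bij_betw_trans[OF bij_betw_rank])
  moreover have "heavy_first_ports t u = Suc \<circ> rank ts"
    using ts by (auto simp: heavy_first_ports_def)
  ultimately show "bij_betw (heavy_first_ports t u) {..<deg t u} {1..deg t u}"
    using ts by (simp add: deg_def)
  fix i j
  assume "i < deg t u" "j < deg t u" "heavy_first_ports t u i < heavy_first_ports t u j"
  then have "tree_size (ts ! (size_order ts ! rank ts j)) \<le> tree_size (ts ! (size_order ts ! rank ts i))"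
    using ts by (intro size_order_nonincreasing) (auto simp: heavy_first_ports_def deg_def rank_less)
  then show "tsize (subtree_at t (u @ [j])) \<le> tsize (subtree_at t (u @ [i]))"
    using ts \<open>i < deg t u\<close> \<open>j < deg t u\<close>
    by (simp add: subtree_at_child tsize_eq_tree_size size_order_rank deg_def)
qed

section \<open>Rounding to p significant bits\<close>

definition round_up :: "nat \<Rightarrow> nat \<Rightarrow> nat" where
  "round_up e a = (a + 2 ^ e - 1) div 2 ^ e * 2 ^ e"

lemma round_up_bounds: "a \<le> round_up e a" "round_up e a < a + 2 ^ e"
proof -
  have "(a + 2 ^ e - 1) div 2 ^ e * 2 ^ e + (a + 2 ^ e - 1) mod 2 ^ e = a + 2 ^ e - 1"
    by (rule div_mult_mod_eq)
  moreover have "(a + 2 ^ e - 1) mod 2 ^ e < (2::nat) ^ e"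
    by simp
  ultimately show "a \<le> round_up e a" "round_up e a < a + 2 ^ e"
    unfolding round_up_def by linarith+
qed

lemma dvd_round_up: "2 ^ e dvd round_up e a"
  by (simp add: round_up_def)

lemma round_up_0: "round_up 0 a = a"
  by (simp add: round_up_def)

lemma round_up_le:
  assumes "a \<le> b" "2 ^ e dvd b"
  shows "round_up e a \<le> b"
proof -
  obtain c where b: "b = c * 2 ^ e"
    using assms(2) by (auto elim: dvdE simp: mult.commute)
  have "(0::nat) < 2 ^ e" "(c + 1) * 2 ^ e = c * 2 ^ e + 2 ^ e"
    by simp_all
  then have "a + 2 ^ e - 1 < (c + 1) * 2 ^ e"
    using assms(1) b by linarith
  then have "(a + 2 ^ e - 1) div 2 ^ e \<le> c"
    by (simp add: less_Suc_eq_le[symmetric] div_less_iff_less_mult)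
  then show ?thesis
    unfolding round_up_def b by simp
qed

text \<open>The number \<open>x\<close> rounded up to \<open>p\<close> significant bits is
  \<open>float_mant p x * 2 ^ float_exp p x\<close>, where \<open>float_exp p x\<close> is the least \<open>e\<close> with
  \<open>x \<le> 2 ^ (p + e)\<close>.\<close>

definition float_exp :: "nat \<Rightarrow> nat \<Rightarrow> nat" where
  "float_exp p x = floorlog 2 (x - 1) - p"

lemma le_two_power_float_exp: "x \<le> 2 ^ (p + float_exp p x)"
proof -
  have "floorlog 2 (x - 1) \<le> p + float_exp p x"
    by (simp add: float_exp_def)
  then have "x - 1 < 2 ^ (p + float_exp p x)"
    by (simp add: floorlog_le_iff)
  then show ?thesis
    by simp
qed

lemma float_exp_pos_imp_less:
  assumes "0 < float_exp p x"
  shows "2 ^ (p + float_exp p x - 1) < x"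
proof -
  have fl: "floorlog 2 (x - 1) = p + float_exp p x"
    using assms by (simp add: float_exp_def)
  then have "0 < floorlog 2 (x - 1)"
    using assms by linarith
  then have "0 < x - 1"
    by (simp add: floorlog_def split: if_splits)
  moreover have "2 ^ (p + float_exp p x - 1) \<le> x - 1"
    using floorlog_bounds[of "x - 1" 2] fl \<open>0 < x - 1\<close> by simp
  ultimately show ?thesis
    by linarith
qed

lemma float_exp_mono: "x \<le> y \<Longrightarrow> float_exp p x \<le> float_exp p y"
  unfolding float_exp_def by (intro diff_le_mono floorlog_mono) simp

lemma float_exp_le:
  assumes "x \<le> 2 ^ k"
  shows "float_exp p x \<le> k"
proof -
  have "(0::nat) < 2 ^ k"
    by simp
  then have "x - 1 < 2 ^ k"
    using assms by linarith
  then have "floorlog 2 (x - 1) \<le> k"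
    by (simp add: floorlog_le_iff)
  then show ?thesis
    by (simp add: float_exp_def)
qed

definition float_mant :: "nat \<Rightarrow> nat \<Rightarrow> nat" where
  "float_mant p x = round_up (float_exp p x) x div 2 ^ float_exp p x"

lemma float_mant_times: "float_mant p x * 2 ^ float_exp p x = round_up (float_exp p x) x"
  by (simp add: float_mant_def dvd_round_up)

lemma round_up_float_exp_le: "round_up (float_exp p x) x \<le> 2 ^ (p + float_exp p x)"
  using le_two_power_float_exp by (intro round_up_le) (simp_all add: power_add)

lemma float_mant_le: "float_mant p x \<le> 2 ^ p"
proof -
  have "round_up (float_exp p x) x \<le> 2 ^ p * 2 ^ float_exp p x"
    using round_up_float_exp_le by (simp add: power_add)
  then have "float_mant p x \<le> 2 ^ p * 2 ^ float_exp p x div 2 ^ float_exp p x"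
    unfolding float_mant_def by (rule div_le_mono)
  then show ?thesis
    by simp
qed

text \<open>Wherever a slot of this size starts, it contains the \<open>float_mant p x * 2 ^ e\<close>
  addresses following the first multiple of \<open>2 ^ e\<close> in it (\<open>round_up_in_slot\<close>).\<close>

definition slot_size :: "nat \<Rightarrow> nat \<Rightarrow> nat" where
  "slot_size p x = (float_mant p x + 1) * 2 ^ float_exp p x - 1"

lemma slot_size_eq: "slot_size p x = round_up (float_exp p x) x + 2 ^ float_exp p x - 1"
  by (simp add: slot_size_def algebra_simps float_mant_times)

lemma round_up_in_slot:
  "round_up (float_exp p x) a + round_up (float_exp p x) x \<le> a + slot_size p x"
  using round_up_bounds(2)[of "float_exp p x" a] by (simp add: slot_size_eq)

lemma slot_size_le: "real (slot_size p x) \<le> real x * (1 + 4 / 2 ^ p)"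
proof (cases "float_exp p x = 0")
  case True
  then show ?thesis
    by (simp add: slot_size_eq round_up_0 ring_distribs)
next
  case False
  define e where "e = float_exp p x"
  have "slot_size p x \<le> x + 2 * 2 ^ e"
    using round_up_bounds(2)[of e x] by (simp add: slot_size_eq e_def)
  then have "real (slot_size p x) \<le> real (x + 2 * 2 ^ e)"
    by (simp only: of_nat_le_iff)
  then have slot: "real (slot_size p x) \<le> real x + 2 * 2 ^ e"
    by simp
  have "2 ^ (p + e - 1) < x"
    using False float_exp_pos_imp_less unfolding e_def by blast
  then have "2 ^ p * 2 ^ e < 2 * x"
    using False by (cases e) (simp_all add: e_def power_add)
  then have "real (2 ^ p * 2 ^ e) < real (2 * x)"
    by (simp only: of_nat_less_iff)
  then have "(2::real) ^ p * 2 ^ e < 2 * real x"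
    by simp
  then have "2 * 2 ^ e \<le> real x * (4 / 2 ^ p)"
    by (simp add: field_simps)
  then show ?thesis
    using slot by (simp add: algebra_simps)
qed

lemma le_slot_size: "x \<le> slot_size p x"
proof -
  have "(1::nat) \<le> 2 ^ float_exp p x"
    by simp
  then show ?thesis
    using round_up_bounds(1)[of x "float_exp p x"] unfolding slot_size_eq by linarith
qed

section \<open>Layout of the address space\<close>

text \<open>Only light children are rounded, so rounding losses accumulate along light edges only.\<close>

fun space :: "nat \<Rightarrow> rtree \<Rightarrow> nat" where
  "space p (Node ts) = (let a = map (space p) ts in
     1 + sum_list (map (\<lambda>i. slot_size p (a ! i)) (lights ts)) + (if ts = [] then 0 else a ! heavy ts))"

definition slot_sizes :: "nat \<Rightarrow> rtree list \<Rightarrow> nat list" where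
  "slot_sizes p ts = map (\<lambda>i. slot_size p (space p (ts ! i))) (lights ts)"

lemma space_Node:
  "space p (Node ts) = 1 + sum_list (slot_sizes p ts) + (if ts = [] then 0 else space p (ts ! heavy ts))"
proof -
  have "map (\<lambda>i. slot_size p (map (space p) ts ! i)) (lights ts) = slot_sizes p ts"
    unfolding slot_sizes_def by (rule map_cong) (auto simp: set_lights)
  then show ?thesis
    by (simp add: heavy_less)
qed

declare space.simps [simp del]

lemma space_pos: "0 < space p t"
  by (cases t) (simp add: space_Node)

lemma space_child_less:
  assumes "i < length ts"
  shows "space p (ts ! i) < space p (Node ts)"
proof (cases "i = heavy ts")
  case False
  then have "i \<in> set (lights ts)"
    using assms by (simp add: set_lights)
  then have "slot_size p (space p (ts ! i)) \<le> sum_list (slot_sizes p ts)"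
    unfolding slot_sizes_def by (intro member_le_sum_list) auto
  then show ?thesis
    using le_slot_size[of "space p (ts ! i)" p] by (simp add: space_Node)
qed (use assms in \<open>auto simp: space_Node\<close>)

lemma sum_list_take_mono: "k \<le> k' \<Longrightarrow> sum_list (take k xs) \<le> sum_list (take k' (xs :: nat list))"
  by (metis le_add1 le_add_diff_inverse sum_list_append take_add)

text \<open>The block of a node: its identifier \<open>start\<close> and the end \<open>stop\<close> of the address range
  \<open>[start, stop)\<close> claimed for its subtree, a multiple of \<open>2 ^ expo\<close>.\<close>

datatype block = Block (start: nat) (expo: nat) (stop: nat)

definition slot_start :: "nat \<Rightarrow> nat \<Rightarrow> rtree list \<Rightarrow> nat \<Rightarrow> nat" where
  "slot_start p s ts k = s + 1 + sum_list (take k (slot_sizes p ts))"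

lemma slot_start_mono: "k \<le> k' \<Longrightarrow> slot_start p s ts k \<le> slot_start p s ts k'"
  unfolding slot_start_def using sum_list_take_mono by simp

lemma slot_start_le: "slot_start p s ts k \<le> s + 1 + sum_list (slot_sizes p ts)"
  using slot_start_mono[of k "length (slot_sizes p ts)" p s ts]
  by (cases "k \<le> length (slot_sizes p ts)") (simp_all add: slot_start_def)

lemma slot_start_le_space: "slot_start p s ts k \<le> s + space p (Node ts)"
proof -
  have "1 + sum_list (slot_sizes p ts) \<le> space p (Node ts)"
    by (simp add: space_Node)
  then show ?thesis
    using slot_start_le[of p s ts k] by linarith
qed

lemma slot_start_Suc:
  "k < length (lights ts) \<Longrightarrow>
     slot_start p s ts (Suc k) = slot_start p s ts k + slot_size p (space p (ts ! (lights ts ! k)))"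
  by (simp add: slot_start_def slot_sizes_def take_Suc_conv_app_nth)

text \<open>A light child is aligned to \<open>2 ^ e\<close> inside its slot, so that its range end is again
  a multiple of \<open>2 ^ e\<close>; the heavy child inherits the range end of its parent.\<close>

definition child_block :: "nat \<Rightarrow> block \<Rightarrow> rtree list \<Rightarrow> nat \<Rightarrow> block" where
  "child_block p b ts i =
     (if i = heavy ts then Block (start b + 1 + sum_list (slot_sizes p ts)) (expo b) (stop b)
      else let x = space p (ts ! i); e = float_exp p x;
               s = round_up e (slot_start p (start b) ts (rank ts i - 1))
           in Block s e (s + round_up e x))"

lemma heavy_child_block:
  "child_block p b ts (heavy ts) = Block (start b + 1 + sum_list (slot_sizes p ts)) (expo b) (stop b)"
  by (simp add: child_block_def)

lemma light_child_block:
  fixes p :: nat and b :: block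
  assumes "i < length ts" "i \<noteq> heavy ts"
  defines "k \<equiv> rank ts i - 1" and "c \<equiv> child_block p b ts i"
  shows "slot_start p (start b) ts k \<le> start c"
    and "start c + space p (ts ! i) \<le> stop c"
    and "stop c \<le> slot_start p (start b) ts (Suc k)"
    and "expo c = float_exp p (space p (ts ! i))"
    and "2 ^ expo c dvd stop c"
    and "stop c \<le> start c + 2 ^ (p + expo c)"
proof -
  define x where "x = space p (ts ! i)"
  define e where "e = float_exp p x"
  define a where "a = slot_start p (start b) ts k"
  have c: "c = Block (round_up e a) e (round_up e a + round_up e x)"
    using assms(2) by (simp add: c_def child_block_def Let_def x_def e_def a_def k_def)
  show "slot_start p (start b) ts k \<le> start c" "start c + space p (ts ! i) \<le> stop c"
    using round_up_bounds(1) by (simp_all add: c a_def x_def)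
  have "slot_start p (start b) ts (Suc k) = a + slot_size p x"
    using lights_rank[OF assms(1,2)] by (simp add: slot_start_Suc a_def x_def k_def)
  then show "stop c \<le> slot_start p (start b) ts (Suc k)"
    using round_up_in_slot[of p x a] by (simp add: c e_def)
  show "expo c = float_exp p (space p (ts ! i))"
    by (simp add: c e_def x_def)
  show "2 ^ expo c dvd stop c"
    by (simp add: c dvd_round_up)
  show "stop c \<le> start c + 2 ^ (p + expo c)"
    using round_up_float_exp_le[of p x] by (simp add: c e_def)
qed

lemma child_block_range:
  assumes "i < length ts"
  shows "start b < start (child_block p b ts i)"
    and "start (child_block p b ts i) + space p (ts ! i) \<le> start b + space p (Node ts)"
proof (atomize (full), cases "i = heavy ts")
  case True
  moreover have "ts \<noteq> []"
    using assms by auto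
  ultimately show "start b < start (child_block p b ts i) \<and>
      start (child_block p b ts i) + space p (ts ! i) \<le> start b + space p (Node ts)"
    by (simp add: heavy_child_block space_Node)
next
  case False
  have "start b < slot_start p (start b) ts (rank ts i - 1)"
    by (simp add: slot_start_def)
  moreover have "slot_start p (start b) ts (Suc (rank ts i - 1)) \<le> start b + space p (Node ts)"
    by (rule slot_start_le_space)
  ultimately show "start b < start (child_block p b ts i) \<and>
      start (child_block p b ts i) + space p (ts ! i) \<le> start b + space p (Node ts)"
    using light_child_block(1-3)[OF assms False, of p b] by linarith
qed

lemma child_block_before:
  assumes "i < length ts" "j < length ts" "i \<noteq> heavy ts" "j = heavy ts \<or> rank ts i < rank ts j"
  shows "stop (child_block p b ts i) \<le> start (child_block p b ts j)"
  using assms(4)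
proof
  assume "j = heavy ts"
  have "stop (child_block p b ts i) \<le> slot_start p (start b) ts (Suc (rank ts i - 1))"
    by (rule light_child_block(3)[OF assms(1,3)])
  also have "\<dots> \<le> start b + 1 + sum_list (slot_sizes p ts)"
    by (rule slot_start_le)
  finally show ?thesis
    using \<open>j = heavy ts\<close> by (simp add: heavy_child_block)
next
  assume "rank ts i < rank ts j"
  then have "j \<noteq> heavy ts"
    using rank_eq_0_iff[OF assms(2)] by auto
  have "Suc (rank ts i - 1) \<le> rank ts j - 1"
    using \<open>rank ts i < rank ts j\<close> rank_eq_0_iff[OF assms(1)] assms(3) by auto
  then have "slot_start p (start b) ts (Suc (rank ts i - 1)) \<le> slot_start p (start b) ts (rank ts j - 1)"
    by (rule slot_start_mono)
  then show ?thesis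
    using light_child_block(3)[OF assms(1,3), of p b] light_child_block(1)[OF assms(2) \<open>j \<noteq> heavy ts\<close>, of p b]
    by linarith
qed

lemma child_blocks_disjoint:
  assumes "i < length ts" "j < length ts" "i \<noteq> j"
  shows "stop (child_block p b ts i) \<le> start (child_block p b ts j)
    \<or> start (child_block p b ts j) + space p (ts ! j) \<le> start (child_block p b ts i)"
proof (cases "i \<noteq> heavy ts \<and> (j = heavy ts \<or> rank ts i < rank ts j)")
  case True
  then show ?thesis
    using child_block_before[OF assms(1,2)] by blast
next
  case False
  have "rank ts i \<noteq> rank ts j"
    using bij_betw_imp_inj_on[OF bij_betw_rank] assms by (auto dest: inj_onD)
  with False assms(3) have "j \<noteq> heavy ts" "i = heavy ts \<or> rank ts j < rank ts i"
    by auto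
  then show ?thesis
    using child_block_before[OF assms(2,1)] light_child_block(2)[OF assms(2), of p b]
    by (meson le_trans)
qed

text \<open>The last conjunct bounds the quotient by which a label encodes \<open>stop\<close>.\<close>

definition fits :: "nat \<Rightarrow> block \<Rightarrow> rtree \<Rightarrow> bool" where
  "fits p b t \<longleftrightarrow>
     start b + space p t \<le> stop b \<and> 2 ^ expo b dvd stop b \<and> stop b \<le> start b + 2 ^ (p + expo b)"

lemma fits_child_block:
  assumes "fits p b (Node ts)" "i < length ts"
  shows "fits p (child_block p b ts i) (ts ! i) \<and> stop (child_block p b ts i) \<le> stop b"
proof (cases "i = heavy ts")
  case True
  then show ?thesis
    using assms child_block_range[OF assms(2), where b=b and p=p] by (auto simp: fits_def heavy_child_block)
next
  case False
  note c = light_child_block[OF assms(2) False, of p b]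
  have "stop (child_block p b ts i) \<le> stop b"
    using c(3) slot_start_le_space[of p "start b" ts] assms(1) unfolding fits_def by (meson le_trans)
  then show ?thesis
    using c(2,5,6) by (simp add: fits_def)
qed

fun block_at :: "nat \<Rightarrow> block \<Rightarrow> rtree \<Rightarrow> nat list \<Rightarrow> block" where
  "block_at p b t [] = b"
| "block_at p b (Node ts) (i # u) = block_at p (child_block p b ts i) (ts ! i) u"

lemma block_at_append:
  "block_at p b t (u @ v) = block_at p (block_at p b t u) (subtree_at t u) v"
  by (induction p b t u rule: block_at.induct) auto

lemma start_block_at_bounds:
  assumes "valid_pos t u"
  shows "start b \<le> start (block_at p b t u) \<and> start (block_at p b t u) < start b + space p t"
  using assms
proof (induction u arbitrary: t b)
  case Nil
  then show ?case
    using space_pos by simp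
next
  case (Cons i u)
  obtain ts where t: "t = Node ts"
    by (cases t)
  with Cons.prems have i: "i < length ts" and u: "valid_pos (ts ! i) u"
    by auto
  have "start (child_block p b ts i) \<le> start (block_at p b t (i # u))"
    "start (block_at p b t (i # u)) < start (child_block p b ts i) + space p (ts ! i)"
    using Cons.IH[OF u, where b="child_block p b ts i"] t by simp_all
  then show ?case
    using child_block_range[OF i, where b=b and p=p] t by simp
qed

lemma fits_block_at:
  assumes "fits p b t" "valid_pos t u"
  shows "fits p (block_at p b t u) (subtree_at t u) \<and> stop (block_at p b t u) \<le> stop b"
  using assms
proof (induction u arbitrary: t b)
  case (Cons i u)
  obtain ts where t: "t = Node ts"
    by (cases t)
  with Cons.prems have "i < length ts" "valid_pos (ts ! i) u"
    by auto
  then show ?case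
    using Cons fits_child_block[of p b ts i] t by fastforce
qed simp

lemma expo_block_at_le:
  assumes "valid_pos t u"
  shows "expo (block_at p b t u) \<le> max (expo b) (float_exp p (space p t))"
  using assms
proof (induction u arbitrary: t b)
  case (Cons i u)
  obtain ts where t: "t = Node ts"
    by (cases t)
  with Cons.prems have i: "i < length ts" and u: "valid_pos (ts ! i) u"
    by auto
  have mono: "float_exp p (space p (ts ! i)) \<le> float_exp p (space p t)"
    using less_imp_le[OF space_child_less[OF i]] t by (intro float_exp_mono) simp
  have "expo (child_block p b ts i) \<le> max (expo b) (float_exp p (space p (ts ! i)))"
    using light_child_block(4)[OF i, of p b] by (cases "i = heavy ts") (simp_all add: heavy_child_block)
  then show ?case
    using Cons.IH[OF u, of "child_block p b ts i"] mono t by simp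
qed simp

lemma prefix_if_start_in_block:
  assumes "fits p b t" "valid_pos t u" "valid_pos t w"
    and "start (block_at p b t u) \<le> start (block_at p b t w)"
    and "start (block_at p b t w) < stop (block_at p b t u)"
  shows "prefix u w"
  using assms
proof (induction u arbitrary: t b w)
  case (Cons i u)
  obtain ts where t: "t = Node ts"
    by (cases t)
  with Cons.prems have i: "i < length ts" and u: "valid_pos (ts ! i) u"
    by auto
  define c where "c = child_block p b ts i"
  have fc: "fits p c (ts ! i)"
    using fits_child_block[OF _ i] Cons.prems(1) t by (simp add: c_def)
  have "start c \<le> start (block_at p b t w)" "start (block_at p b t w) < stop c"
    using Cons.prems(4,5) start_block_at_bounds[OF u, of c p] fits_block_at[OF fc u] t
    by (simp_all add: c_def)
  moreover obtain j w' where w: "w = j # w'"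
    using calculation child_block_range(1)[OF i, where b=b and p=p] by (cases w) (auto simp: c_def)
  moreover have j: "j < length ts" and w': "valid_pos (ts ! j) w'"
    using Cons.prems(3) t w by auto
  ultimately have "start (child_block p b ts j) \<le> start (block_at p b t w)"
    "start (block_at p b t w) < start (child_block p b ts j) + space p (ts ! j)"
    "start c \<le> start (block_at p b t w)" "start (block_at p b t w) < stop c"
    using start_block_at_bounds[OF w', where b="child_block p b ts j" and p=p] t by auto
  then have "j = i"
    using child_blocks_disjoint[OF i j, where p=p and b=b] by (force simp: c_def)
  then have "prefix u w'"
    using Cons.IH[OF fc u, of w'] Cons.prems(4,5) w w' t by (simp add: c_def)
  then show ?case
    using w \<open>j = i\<close> by simp
qed simp

section \<open>Labels and the decoder\<close>

definition binary :: "nat \<Rightarrow> bool list" where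
  "binary x = map (bit x) [0..<floorlog 2 x]"

lemma length_binary: "length (binary x) = floorlog 2 x"
  by (simp add: binary_def)

lemma less_two_power_floorlog: "x < 2 ^ floorlog 2 x"
  using floorlog_le_iff[of 2 x "floorlog 2 x"] by simp

lemma horner_sum_binary: "horner_sum of_bool 2 (binary x) = x"
  unfolding binary_def horner_sum_bit_eq_take_bit
  by (rule take_bit_nat_eq_self[OF less_two_power_floorlog])

definition gamma_code :: "nat \<Rightarrow> bool list" where
  "gamma_code x = replicate (floorlog 2 x) True @ False # binary x"

definition gamma_decode :: "bool list \<Rightarrow> nat \<times> bool list" where
  "gamma_decode bs = (let l = length (takeWhile id bs); r = drop (Suc l) bs
     in (horner_sum of_bool 2 (take l r), drop l r))"

lemma length_gamma_code: "length (gamma_code x) = 2 * floorlog 2 x + 1"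
  by (simp add: gamma_code_def length_binary)

lemma gamma_decode_code: "gamma_decode (gamma_code x @ r) = (x, r)"
proof -
  have "takeWhile id (gamma_code x @ r) = replicate (floorlog 2 x) True"
    by (induction "floorlog 2 x") (simp_all add: gamma_code_def takeWhile_append)
  then show ?thesis
    by (simp add: gamma_decode_def gamma_code_def length_binary horner_sum_binary)
qed

definition encode_list :: "nat list \<Rightarrow> bool list" where
  "encode_list xs = gamma_code (length xs) @ concat (map gamma_code xs)"

fun decode_items :: "nat \<Rightarrow> bool list \<Rightarrow> nat list \<times> bool list" where
  "decode_items 0 bs = ([], bs)"
| "decode_items (Suc n) bs = (let (x, r) = gamma_decode bs; (xs, r') = decode_items n r in (x # xs, r'))"

definition decode_list :: "bool list \<Rightarrow> nat list \<times> bool list" where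
  "decode_list bs = (let (n, r) = gamma_decode bs in decode_items n r)"

lemma decode_list_encode: "decode_list (encode_list xs @ r) = (xs, r)"
proof -
  have "decode_items (length xs) (concat (map gamma_code xs) @ r) = (xs, r)"
    by (induction xs) (simp_all add: gamma_decode_code)
  then show ?thesis
    by (simp add: decode_list_def encode_list_def gamma_decode_code)
qed

lemma length_encode_list_le:
  assumes "\<forall>x \<in> set xs. x < 2 ^ B" "length xs \<le> F"
  shows "length (encode_list xs) \<le> 2 * F + 1 + F * (2 * B + 1)"
proof -
  have "length (concat (map gamma_code xs)) = (\<Sum>x\<leftarrow>xs. 2 * floorlog 2 x + 1)"
    by (induction xs) (simp_all add: length_gamma_code)
  also have "\<dots> \<le> (\<Sum>x\<leftarrow>xs. 2 * B + 1)"
    using assms(1) by (intro sum_list_mono) (simp add: floorlog_le_iff)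
  also have "\<dots> = length xs * (2 * B + 1)"
    by (simp add: sum_list_triv)
  also have "\<dots> \<le> F * (2 * B + 1)"
    using assms(2) by (rule mult_le_mono1)
  finally have "length (concat (map gamma_code xs)) \<le> F * (2 * B + 1)" .
  moreover have "floorlog 2 (length xs) \<le> F"
    using le_less_trans[OF assms(2) less_exp] by (simp add: floorlog_le_iff)
  ultimately show ?thesis
    by (simp add: encode_list_def length_gamma_code)
qed

fun pairs :: "nat list \<Rightarrow> (nat \<times> nat) list" where
  "pairs (a # b # xs) = (a, b) # pairs xs"
| "pairs _ = []"

lemma pairs_concat: "pairs (concat (map (\<lambda>x. [f x, g x]) xs)) = map (\<lambda>x. (f x, g x)) xs"
  by (induction xs) auto

fun find_slot :: "nat \<Rightarrow> nat \<Rightarrow> nat list \<Rightarrow> nat" where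
  "find_slot x a [] = 0"
| "find_slot x a (l # ls) = (if x < a + l then 0 else Suc (find_slot x (a + l) ls))"

lemma find_slot_eqI:
  "k < length ls \<Longrightarrow> a + sum_list (take k ls) \<le> x \<Longrightarrow> x < a + sum_list (take (Suc k) ls)
    \<Longrightarrow> find_slot x a ls = k"
proof (induction ls arbitrary: a k)
  case (Cons l ls)
  then show ?case
    by (cases k) (simp_all add: add.assoc)
qed simp

lemma find_slot_beyond: "a + sum_list ls \<le> x \<Longrightarrow> find_slot x a ls = length ls"
  by (induction ls arbitrary: a) auto

text \<open>The range end is stored in units of \<open>2 ^ expo\<close> relative to \<open>start\<close>.\<close>

definition block_fields :: "nat \<Rightarrow> block \<Rightarrow> rtree list \<Rightarrow> nat list" where
  "block_fields p b ts =
     [expo b, stop b div 2 ^ expo b - start b div 2 ^ expo b - 1] @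
     concat (map (\<lambda>i. [float_exp p (space p (ts ! i)), float_mant p (space p (ts ! i))]) (lights ts))"

definition node_label :: "nat \<Rightarrow> block \<Rightarrow> rtree \<Rightarrow> nat list \<Rightarrow> bool list" where
  "node_label p b t u = (let c = block_at p b t u in
     encode_list (block_fields p c (children (subtree_at t u))) @ binary (start c))"

definition decode_block :: "bool list \<Rightarrow> nat \<times> nat \<times> nat list" where
  "decode_block bs = (let (fs, r) = decode_list bs; s = horner_sum of_bool 2 r; e = fs ! 0 in
     (s, (s div 2 ^ e + 1 + fs ! 1) * 2 ^ e, map (\<lambda>(e, m). (m + 1) * 2 ^ e - 1) (pairs (drop 2 fs))))"

lemma multiple_recovered_from_quotient:
  fixes s E P :: nat
  assumes "s < E" "P dvd E" "0 < P"
  shows "(s div P + 1 + (E div P - s div P - 1)) * P = E"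
proof -
  have "s div P * P \<le> s"
    by (rule div_times_less_eq_dividend)
  moreover have "E div P * P = E"
    using assms(2) by simp
  ultimately have "s div P < E div P"
    using assms(1) by (metis le_less_trans mult_le_cancel2 not_less)
  then show ?thesis
    using \<open>E div P * P = E\<close> by simp
qed

lemma decode_node_label:
  assumes "fits p b t" "valid_pos t u" "subtree_at t u = Node ts"
  shows "decode_block (node_label p b t u)
           = (start (block_at p b t u), stop (block_at p b t u), slot_sizes p ts)"
proof -
  define c where "c = block_at p b t u"
  have "fits p c (Node ts)"
    using fits_block_at[OF assms(1,2)] assms(3) by (simp add: c_def)
  then have "start c < stop c" "2 ^ expo c dvd stop c"
    using space_pos[of p "Node ts"] by (simp_all add: fits_def)
  then have "(start c div 2 ^ expo c + 1 + (stop c div 2 ^ expo c - start c div 2 ^ expo c - 1)) * 2 ^ expo c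
      = stop c"
    by (intro multiple_recovered_from_quotient) simp_all
  moreover have "map (\<lambda>(e, m). (m + 1) * 2 ^ e - 1) (pairs (drop 2 (block_fields p c ts))) = slot_sizes p ts"
    by (simp add: block_fields_def pairs_concat slot_sizes_def slot_size_def)
  ultimately show ?thesis
    using assms(3)
    by (simp add: node_label_def decode_block_def decode_list_encode horner_sum_binary block_fields_def
        flip: c_def)
qed

text \<open>Port 1 leads to the heavy child, port \<open>k + 2\<close> to the light child in slot \<open>k\<close>.\<close>

definition port_towards :: "nat \<Rightarrow> nat \<Rightarrow> nat list \<Rightarrow> nat \<Rightarrow> nat" where
  "port_towards s E ls x =
     (if s < x \<and> x < E then let k = find_slot x (s + 1) ls in if k < length ls then k + 2 else 1
      else 0)"

text \<open>The decoder does not need its first argument \<open>\<lceil>log n\<rceil>\<close>.\<close>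

definition routing_decoder :: decoder where
  "routing_decoder k lu lw = (let (s, E, ls) = decode_block lu in port_towards s E ls (fst (decode_block lw)))"

lemma port_towards_child:
  assumes "fits p b (Node ts)" "i < length ts"
    and "start (child_block p b ts i) \<le> x" "x < start (child_block p b ts i) + space p (ts ! i)"
  shows "port_towards (start b) (stop b) (slot_sizes p ts) x = Suc (rank ts i)"
proof -
  have "start b < x" "x < stop b"
    using assms child_block_range[OF assms(2), where b=b and p=p] by (auto simp: fits_def)
  show ?thesis
  proof (cases "i = heavy ts")
    case True
    then have "find_slot x (start b + 1) (slot_sizes p ts) = length (slot_sizes p ts)"
      using assms(3) by (intro find_slot_beyond) (simp add: heavy_child_block)
    then show ?thesis
      using True \<open>start b < x\<close> \<open>x < stop b\<close> rank_eq_0_iff[OF assms(2)] by (simp add: port_towards_def)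
  next
    case False
    note c = light_child_block[OF assms(2) False, where p=p and b=b]
    have k: "rank ts i - 1 < length (slot_sizes p ts)" "0 < rank ts i"
      using lights_rank[OF assms(2) False] rank_eq_0_iff[OF assms(2)] False
      by (simp_all add: slot_sizes_def)
    have "find_slot x (start b + 1) (slot_sizes p ts) = rank ts i - 1"
      using k(1) c(1-3) assms(3,4) by (intro find_slot_eqI) (simp_all add: slot_start_def)
    then show ?thesis
      using k \<open>start b < x\<close> \<open>x < stop b\<close> by (simp add: port_towards_def)
  qed
qed

lemma routing_decoder_correct:
  assumes "fits p b t" "valid_pos t u" "valid_pos t w" "u \<noteq> w"
  shows "routing_decoder k (node_label p b t u) (node_label p b t w) = route (heavy_first_ports t) u w"
proof -
  obtain ts where ts: "subtree_at t u = Node ts"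
    by (cases "subtree_at t u")
  obtain ts' where ts': "subtree_at t w = Node ts'"
    by (cases "subtree_at t w")
  define bu where "bu = block_at p b t u"
  define sw where "sw = start (block_at p b t w)"
  have dec: "routing_decoder k (node_label p b t u) (node_label p b t w)
      = port_towards (start bu) (stop bu) (slot_sizes p ts) sw"
    using decode_node_label[OF assms(1,2) ts] decode_node_label[OF assms(1,3) ts']
    by (simp add: routing_decoder_def bu_def sw_def)
  show ?thesis
  proof (cases "strict_prefix u w")
    case True
    then obtain i v where w: "w = u @ i # v"
      by (metis prefix_def strict_prefix_def self_append_conv neq_Nil_conv)
    then have i: "i < length ts" and v: "valid_pos (ts ! i) v"
      using assms(3) ts by (simp_all add: valid_pos_append)
    have "sw = start (block_at p (child_block p bu ts i) (ts ! i) v)"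
      using w ts by (simp add: sw_def bu_def block_at_append)
    then have "start (child_block p bu ts i) \<le> sw" "sw < start (child_block p bu ts i) + space p (ts ! i)"
      using start_block_at_bounds[OF v] by simp_all
    moreover have "fits p bu (Node ts)"
      using fits_block_at[OF assms(1,2)] ts by (simp add: bu_def)
    ultimately show ?thesis
      using dec port_towards_child[OF _ i] True w ts by (simp add: route_def heavy_first_ports_def)
  next
    case False
    have "\<not> (start bu < sw \<and> sw < stop bu)"
      using prefix_if_start_in_block[OF assms(1-3)] False assms(4)
      by (auto simp: bu_def sw_def strict_prefix_def)
    then have "port_towards (start bu) (stop bu) (slot_sizes p ts) sw = 0"
      unfolding port_towards_def by auto
    then show ?thesis
      using dec False by (simp add: route_def)
  qed
qed

definition root_block :: "nat \<Rightarrow> rtree \<Rightarrow> block" where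
  "root_block p t = (let e = float_exp p (space p t) in Block 0 e (round_up e (space p t)))"

lemma fits_root_block: "fits p (root_block p t) t"
  by (simp add: fits_def root_block_def Let_def round_up_bounds(1) dvd_round_up round_up_float_exp_le)

text \<open>With \<open>p = log log n + 2\<close> the rounding factor \<open>(1 + 4 / 2 ^ p) ^ log n\<close> is at
  most \<open>e\<close>.\<close>

definition precision :: "nat \<Rightarrow> nat" where
  "precision n = floorlog 2 (ceillog2 n) + 2"

definition routing_encoder :: encoder where
  "routing_encoder t = (let p = precision (tsize t) in (node_label p (root_block p t) t, heavy_first_ports t))"

theorem correct_on_routing_scheme: "correct_on routing_encoder routing_decoder t"
  unfolding correct_on_def routing_encoder_def Let_def
  using canonical_heavy_first_ports routing_decoder_correct[OF fits_root_block] by (simp add: nodes_def)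

section \<open>Label length\<close>

lemma light_size_less:
  assumes "i \<in> set (lights ts)"
  shows "2 * tree_size (ts ! i) < tree_size (Node ts)"
proof -
  have "ts \<noteq> []"
    using assms by (auto simp: lights_def size_order_def)
  then have "tree_size (ts ! heavy ts) + sum_list (map (\<lambda>i. tree_size (ts ! i)) (lights ts))
      = sum_list (map tree_size ts)"
    by (rule heavy_plus_lights_size)
  moreover have "tree_size (ts ! i) \<le> sum_list (map (\<lambda>i. tree_size (ts ! i)) (lights ts))"
    using assms by (intro member_le_sum_list) auto
  ultimately show ?thesis
    using light_size_le_heavy[OF assms] by simp
qed

lemma tree_size_pos: "0 < tree_size t"
  by (cases t) simp

lemma space_Node_le:
  fixes Q :: real
  assumes "ts \<noteq> []" "1 \<le> Q"
    and heavy: "real (space p (ts ! heavy ts)) \<le> real (tree_size (ts ! heavy ts)) * Q"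
    and light: "\<And>i. i \<in> set (lights ts) \<Longrightarrow>
                  real (slot_size p (space p (ts ! i))) \<le> real (tree_size (ts ! i)) * Q"
  shows "real (space p (Node ts)) \<le> real (tree_size (Node ts)) * Q"
proof -
  let ?ls = "lights ts" and ?h = "ts ! heavy ts"
  have "real (space p (Node ts))
      = 1 + (\<Sum>i\<leftarrow>?ls. real (slot_size p (space p (ts ! i)))) + real (space p ?h)"
    using assms(1) by (simp add: space_Node slot_sizes_def sum_list_of_nat[symmetric] o_def)
  also have "\<dots> \<le> 1 + (\<Sum>i\<leftarrow>?ls. real (tree_size (ts ! i)) * Q) + real (tree_size ?h) * Q"
    using light heavy by (intro add_mono sum_list_mono) auto
  also have "\<dots> = 1 + ((\<Sum>i\<leftarrow>?ls. real (tree_size (ts ! i))) + real (tree_size ?h)) * Q"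
    by (simp add: sum_list_mult_const distrib_right)
  also have "\<dots> \<le> (1 + real (sum_list (map (\<lambda>i. tree_size (ts ! i)) ?ls)) + real (tree_size ?h)) * Q"
    using assms(2) by (simp add: sum_list_of_nat[symmetric] o_def algebra_simps)
  also have "\<dots> = real (tree_size (Node ts)) * Q"
    using heavy_plus_lights_size[OF assms(1)] by simp
  finally show ?thesis .
qed

lemma space_le_tree_size:
  assumes "tree_size t < 2 ^ Suc j"
  shows "real (space p t) \<le> real (tree_size t) * (1 + 4 / 2 ^ p) ^ j"
  using assms
proof (induction t arbitrary: j)
  case (Node ts)
  define q :: real where "q = 1 + 4 / 2 ^ p"
  have q: "1 \<le> q" "1 \<le> q ^ j"
    by (simp_all add: q_def)
  show ?case
  proof (cases "ts = []")
    case True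
    then show ?thesis
      using q by (simp add: space_Node slot_sizes_def lights_def size_order_def q_def)
  next
    case False
    let ?h = "ts ! heavy ts"
    have sizes: "tree_size ?h + sum_list (map (\<lambda>i. tree_size (ts ! i)) (lights ts)) = sum_list (map tree_size ts)"
      using heavy_plus_lights_size[OF False] .
    have heavy: "real (space p ?h) \<le> real (tree_size ?h) * q ^ j"
      using Node.IH[of ?h j] heavy_less[OF False] Node.prems sizes by (simp add: q_def)
    have "2 \<le> tree_size (Node ts)"
      using sizes tree_size_pos[of ?h] by simp
    then have "j \<noteq> 0"
      using Node.prems by (intro notI) (simp del: tree_size.simps)
    then obtain j' where j: "j = Suc j'"
      using not0_implies_Suc by blast
    have light: "real (slot_size p (space p (ts ! i))) \<le> real (tree_size (ts ! i)) * q ^ j"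
      if i: "i \<in> set (lights ts)" for i
    proof -
      have "i < length ts"
        using i set_lights by auto
      moreover have "tree_size (ts ! i) < 2 ^ Suc j'"
        using light_size_less[OF i] Node.prems j by simp
      ultimately have "real (space p (ts ! i)) \<le> real (tree_size (ts ! i)) * q ^ j'"
        using Node.IH by (simp add: q_def)
      then have "real (space p (ts ! i)) * q \<le> real (tree_size (ts ! i)) * q ^ j' * q"
        using q(1) by (intro mult_right_mono) simp_all
      moreover have "real (slot_size p (space p (ts ! i))) \<le> real (space p (ts ! i)) * q"
        using slot_size_le by (simp add: q_def)
      ultimately show ?thesis
        using j by (simp add: ac_simps)
    qed
    show ?thesis
      using space_Node_le[OF False q(2) heavy light] by (simp add: q_def)
  qed
qed

lemma space_le_three_tree_size:
  assumes "tree_size t \<le> 2 ^ k"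
  shows "space (floorlog 2 k + 2) t \<le> 3 * tree_size t"
proof -
  define x :: real where "x = 4 / 2 ^ (floorlog 2 k + 2)"
  have "real k < 2 ^ floorlog 2 k"
    using less_two_power_floorlog[of k] by (metis of_nat_less_iff of_nat_numeral of_nat_power)
  then have "real k * x \<le> 1"
    by (simp add: x_def power_add field_simps)
  have "1 + x \<le> exp x" "0 \<le> 1 + x"
    by (rule exp_ge_add_one_self) (simp add: x_def)
  then have "(1 + x) ^ k \<le> exp x ^ k"
    by (rule power_mono)
  also have "\<dots> = exp (real k * x)"
    by (simp add: exp_of_nat_mult)
  also have "\<dots> \<le> exp 1"
    using \<open>real k * x \<le> 1\<close> by simp
  also have "\<dots> \<le> 3"
    by (rule exp_le)
  finally have "real (tree_size t) * (1 + x) ^ k \<le> real (tree_size t) * 3"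
    by (intro mult_left_mono) simp_all
  moreover have "tree_size t < 2 ^ Suc k"
    using assms by (rule le_less_trans) simp
  ultimately have "real (space (floorlog 2 k + 2) t) \<le> real (tree_size t) * 3"
    using space_le_tree_size unfolding x_def by (meson order_trans)
  then show ?thesis
    by simp
qed

lemma space_subtree_at_le: "valid_pos t u \<Longrightarrow> space p (subtree_at t u) \<le> space p t"
proof (induction u arbitrary: t)
  case (Cons i u)
  then obtain ts where "t = Node ts" "i < length ts" "valid_pos (ts ! i) u"
    by (cases t) auto
  then show ?case
    using Cons.IH space_child_less[of i ts p] by fastforce
qed simp

lemma length_block_fields: "length (block_fields p b ts) = 2 + 2 * (length ts - 1)"
  by (simp add: block_fields_def length_concat o_def sum_list_triv length_lights)

lemma block_fields_less:
  assumes "fits p b (Node ts)" "expo b \<le> K" "space p (Node ts) \<le> 2 ^ K" "K < 2 ^ (p + 1)"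
  shows "\<forall>x \<in> set (block_fields p b ts). x < 2 ^ (p + 1)"
proof -
  have "stop b \<le> start b + 2 ^ p * 2 ^ expo b"
    using assms(1) by (simp add: fits_def power_add)
  then have "stop b div 2 ^ expo b \<le> (start b + 2 ^ p * 2 ^ expo b) div 2 ^ expo b"
    by (rule div_le_mono)
  then have "stop b div 2 ^ expo b \<le> start b div 2 ^ expo b + 2 ^ p"
    by simp
  moreover have "(0::nat) < 2 ^ p" "(2::nat) ^ (p + 1) = 2 * 2 ^ p"
    by simp_all
  ultimately have "stop b div 2 ^ expo b - start b div 2 ^ expo b - 1 < 2 ^ (p + 1)"
    by linarith
  moreover have "float_exp p (space p (ts ! i)) < 2 ^ (p + 1)" "float_mant p (space p (ts ! i)) < 2 ^ (p + 1)"
    if "i \<in> set (lights ts)" for i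
  proof -
    have "space p (ts ! i) \<le> 2 ^ K"
      using that set_lights space_child_less[of i ts p] assms(3) by fastforce
    then show "float_exp p (space p (ts ! i)) < 2 ^ (p + 1)"
      using float_exp_le assms(4) by (meson le_less_trans)
    show "float_mant p (space p (ts ! i)) < 2 ^ (p + 1)"
      using float_mant_le by (rule le_less_trans) simp
  qed
  ultimately show ?thesis
    using assms(2,4) by (auto simp: block_fields_def)
qed

lemma length_node_label_le:
  assumes "bounded_deg \<Delta> t" "u \<in> nodes t" "tree_size t \<le> 2 ^ k"
  defines "p \<equiv> floorlog 2 k + 2" and "F \<equiv> 2 + 2 * \<Delta>"
  shows "length (node_label p (root_block p t) t u) \<le> 2 * F + 1 + F * (2 * (p + 1) + 1) + (k + 2)"
proof -
  define b where "b = block_at p (root_block p t) t u"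
  obtain ts where ts: "subtree_at t u = Node ts"
    by (cases "subtree_at t u")
  have u: "valid_pos t u"
    using assms(2) by (simp add: nodes_def)
  have "(0::nat) < 2 ^ k" "(2::nat) ^ (k + 2) = 4 * 2 ^ k"
    by simp_all
  then have "space p t < 2 ^ (k + 2)"
    using space_le_three_tree_size[OF assms(3)] assms(3) unfolding p_def by linarith
  then have space: "space p t \<le> 2 ^ (k + 2)"
    by simp
  have "expo b \<le> float_exp p (space p t)"
    using expo_block_at_le[OF u, of p "root_block p t"] by (simp add: b_def root_block_def Let_def)
  then have "expo b \<le> k + 2"
    using float_exp_le[OF space, of p] by linarith
  moreover have "k + 2 < 2 ^ (p + 1)"
    using less_two_power_floorlog[of k] unfolding p_def by simp
  moreover have "fits p b (Node ts)" "space p (Node ts) \<le> 2 ^ (k + 2)"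
    using fits_block_at[OF fits_root_block u] space_subtree_at_le[OF u, of p] space ts
    by (simp_all add: b_def)
  ultimately have fields: "\<forall>x \<in> set (block_fields p b ts). x < 2 ^ (p + 1)"
    by (intro block_fields_less)
  have "length ts \<le> \<Delta>"
    using assms(1,2) ts by (auto simp: bounded_deg_def deg_def)
  then have "length (block_fields p b ts) \<le> F"
    by (simp add: length_block_fields F_def)
  then have "length (encode_list (block_fields p b ts)) \<le> 2 * F + 1 + F * (2 * (p + 1) + 1)"
    using fields by (intro length_encode_list_le)
  moreover have "start b < 2 ^ (k + 2)"
    using start_block_at_bounds[OF u, of "root_block p t" p] \<open>space p t < 2 ^ (k + 2)\<close>
    by (simp add: b_def root_block_def Let_def)
  then have "floorlog 2 (start b) \<le> k + 2"
    by (simp add: floorlog_le_iff)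
  ultimately show ?thesis
    using ts by (simp add: node_label_def length_binary flip: b_def)
qed

lemma floorlog_le_log: "0 < k \<Longrightarrow> real (floorlog 2 k) \<le> log 2 (real k) + 1"
  by (simp add: floorlog_def)

lemma le_log_plus_log_log:
  fixes l :: real and k len F :: nat
  assumes "2 \<le> l" "l \<le> real k" "real k < l + 1" "p = floorlog 2 k + 2"
    and "len \<le> 2 * F + 1 + F * (2 * (p + 1) + 1) + (k + 2)"
  shows "real len \<le> l + real (4 + 15 * F) * log 2 l"
proof -
  define L where "L = log 2 l"
  have L: "1 \<le> L"
    using assms(1) by (simp add: L_def)
  have "log 2 (real k) \<le> log 2 (2 * l)"
    using assms(1-3) by simp
  also have "\<dots> = 1 + L"
    using assms(1) by (simp add: L_def log_mult)
  finally have p: "real p \<le> 4 + L"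
    using floorlog_le_log[of k] assms(1,2,4) by simp
  have "real len \<le> real (2 * F + 1 + F * (2 * (p + 1) + 1) + (k + 2))"
    using assms(5) by (simp only: of_nat_le_iff)
  also have "\<dots> = 2 * real F + 1 + real F * (2 * (real p + 1) + 1) + (real k + 2)"
    by (simp add: algebra_simps)
  also have "\<dots> \<le> 2 * real F + 1 + real F * (2 * (4 + L + 1) + 1) + (l + 1 + 2)"
    using p assms(3) by (intro add_mono mult_left_mono) auto
  also have "\<dots> = l + (4 + 13 * real F) + 2 * real F * L"
    by (simp add: algebra_simps)
  also have "\<dots> \<le> l + (4 + 13 * real F) * L + 2 * real F * L"
    using L by (intro add_mono) (auto intro: mult_left_mono[of 1 L, simplified])
  also have "\<dots> = l + real (4 + 15 * F) * L"
    by (simp add: algebra_simps)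
  finally show ?thesis
    unfolding L_def .
qed

lemma length_routing_label_le:
  assumes "bounded_deg \<Delta> t" "4 \<le> tsize t" "u \<in> nodes t"
  shows "real (length (fst (routing_encoder t) u))
           \<le> log 2 (real (tsize t)) + real (4 + 15 * (2 + 2 * \<Delta>)) * log 2 (log 2 (real (tsize t)))"
proof -
  define k where "k = ceillog2 (tsize t)"
  have n: "0 < tsize t"
    using assms(2) by simp
  have "log 2 4 \<le> log 2 (real (tsize t))"
    using assms(2) by simp
  moreover have "log 2 (4::real) = 2"
    using log_pow_cancel[of "2::real" 2] by simp
  ultimately have "2 \<le> log 2 (real (tsize t))"
    by simp
  moreover have "tree_size t \<le> 2 ^ k"
    using le_two_power_ceillog2 by (simp add: k_def tsize_eq_tree_size)
  then have "length (node_label (floorlog 2 k + 2) (root_block (floorlog 2 k + 2) t) t u)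
      \<le> 2 * (2 + 2 * \<Delta>) + 1 + (2 + 2 * \<Delta>) * (2 * (floorlog 2 k + 2 + 1) + 1) + (k + 2)"
    by (rule length_node_label_le[OF assms(1,3)])
  moreover have "fst (routing_encoder t) u
      = node_label (floorlog 2 k + 2) (root_block (floorlog 2 k + 2) t) t u"
    by (simp add: routing_encoder_def precision_def Let_def k_def)
  ultimately show ?thesis
    using ceillog2_ge_log[OF n] ceillog2_less_log[OF n] unfolding k_def
    by (intro le_log_plus_log_log[where p="floorlog 2 k + 2"]) (auto simp: k_def)
qed

theorem mainTheorem1:
  fixes \<Delta> :: nat
  assumes "\<Delta> \<ge> 1"
  shows "\<exists>(enc :: encoder) (dec :: decoder) (c :: real) (N0 :: nat).
           (\<forall>t. bounded_deg \<Delta> t \<longrightarrow> correct_on enc dec t) \<and>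
           (\<forall>t. bounded_deg \<Delta> t \<longrightarrow> tsize t \<ge> N0 \<longrightarrow>
              (\<forall>u \<in> nodes t. real (length (fst (enc t) u))
                  \<le> log 2 (real (tsize t)) + c * log 2 (log 2 (real (tsize t)))))"
  using correct_on_routing_scheme length_routing_label_le by blast

end
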